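(* Assume: the vectors $\pi(t)\in\mathbb R^m$ have nonnegative entries summing to $1$ and satisfy (i) $\pi(t)^\top=\pi(t+1)^\top A(t)$ for all $t$, (ii) $|[A(s:t)]_{ij}-\pi_j(t)|\le B\lambda^{s-t}$ for all $i,j$, $s\ge t\ge0$, with $B>0$, $\lambda\in(0,1)$, and (iii) $\pi_i(t)\ge\eta$ for all $i,t$ for some $\eta>0$; there is $R\ge1$ with $\mathrm{dist}(x,\Omega)\le R\max_{i}\mathrm{dist}(x,\Omega_i)$ for all $x\in U=\mathrm{conv}(\bigcup_i\Omega_i)$; $\theta_i(0)\in\Omega_i$ for all $i$; and $\{\alpha(t)\}$ is nonincreasing. Let $\theta_i(t)$ be the DPG iterates, $\bar\theta(t)=\sum_j\pi_j(t)\theta_j(t)$, $w(t)=P_\Omega[\bar\theta(t)]$, $\beta(t)=\sum_i\|\phi_i(t)\|$, $\psi(t)=\alpha(t)\sum_{r=0}^{t-1}\lambda^{t-r-1}\beta(r)$, and define $D_1=B\sum_j\|\theta_j(0)\|$, $D_2=mBC$, $D_3=2C(1+R/\eta)$, $D_4=\eta/2$, $b=\sqrt{\eta/m}$, $a=\frac{D_3B}{(1-\lambda)b}$, $D_5=C^2+a^2/2$, $D_{13}=D_1D_3$, $D_{23}=D_2D_3$. Then for every $v\in\Omega$ and every $t\ge0$, $$\sum_{i=1}^m\pi_i(t+1)\|\theta_i(t+1)-v\|^2+ab\,\psi(t+1)\le\sum_{i=1}^m\pi_i(t)\|\theta_i(t)-v\|^2+ab\,\psi(t)-2\alpha(t)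c^\top(w(t)-v)+D_5\alpha^2(t)-D_4\sum_{i=1}^m\|\phi_i(t)\|^2+D_{13}\alpha(t)\lambda^t+D_{23}\alpha(t)\sum_{r=0}^{t-1}\lambda^{t-r-1}\alpha(r).$$
   Context: Agents $\mathcal V=\{1,\dots,m\}$. $A(t)=[a_{ij}(t)]\in\mathbb R^{m\times m}$, $t\in\mathbb Z_{\ge0}$, are row-stochastic matrices with nonnegative entries; for $s\ge t$, $A(s:t)=A(s-1)\cdots A(t)$, $A(t:t)=I$. $\Omega_1,\dots,\Omega_m\subseteq\mathbb R^p$ are nonempty closed convex sets with $\Omega=\bigcap_i\Omega_i\ne\emptyset$; $c\in\mathbb R^p$, $C=\|c\|$; $\alpha(t)>0$ are stepsizes. $P_K$ denotes Euclidean projection onto a closed convex set $K$ and $\mathrm{dist}(x,K)=\inf_{z\in K}\|x-z\|$. DPG iteration: $\theta_i(t+1)=P_{\Omega_i}\big[\sum_j a_{ij}(t)\theta_j(t)-\alpha(t)c\big]$, and $\phi_i(t)=\theta_i(t+1)-\big[\sum_j a_{ij}(t)\theta_j(t)-\alpha(t)c\big]$. *)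

theory Defs
  imports "HOL-Analysis.Analysis"
begin

text \<open>Matrices over a finite agent index type 'i are functions 'i => 'i => real.
  mat_prod X Y is the usual product; trans_prod A s t is A(s:t) = A(s-1) ... A(t),
  with A(t:t) = I (and, by convention, I also for s < t, which is never used).\<close>

definition mat_prod :: "('i::finite \<Rightarrow> 'i \<Rightarrow> real) \<Rightarrow> ('i \<Rightarrow> 'i \<Rightarrow> real) \<Rightarrow> 'i \<Rightarrow> 'i \<Rightarrow> real" where
  "mat_prod X Y = (\<lambda>i j. \<Sum>k\<in>UNIV. X i k * Y k j)"

definition id_mat :: "'i \<Rightarrow> 'i \<Rightarrow> real" where
  "id_mat = (\<lambda>i j. if i = j then 1 else 0)"

fun trans_prod :: "(nat \<Rightarrow> 'i::finite \<Rightarrow> 'i \<Rightarrow> real) \<Rightarrow> nat \<Rightarrow> nat \<Rightarrow> 'i \<Rightarrow> 'i \<Rightarrow> real" where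
  "trans_prod A 0 t = id_mat"
| "trans_prod A (Suc s) t = (if Suc s \<le> t then id_mat else mat_prod (A s) (trans_prod A s t))"

end

theory Submission
  imports Defs
begin

text \<open>Let avg be the \<pi>(t)-average of the iterates. Since \<pi>(t)' = \<pi>(t+1)' A(t), the average
  moves only by the \<pi>(t+1)-average of the perturbations \<phi>_i(t) - \<alpha>(t) c; unrolling both
  recursions and using the geometric mixing of A(s:t) bounds the consensus error
  |\<theta>_i(t) - avg| by a geometrically discounted sum of past residuals and stepsizes.
  The projection inequality and Jensen's inequality give the usual descent of the
  \<pi>-weighted squared distances to v, with the linear term evaluated at avg; linear regularity
  of the sets moves it to w(t) at the price of |c| R times the consensus error. The residual
  part of that price is proportional to \<psi>(t) and is absorbed by the potential a b \<psi>:
  \<psi> contracts by the factor \<lambda> and grows by \<alpha>(t) \<beta>(t), and AM-GM trades this growth for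
  a^2 \<alpha>(t)^2 / 2 plus half of the gain \<eta> \<Sum>|\<phi>_i(t)|^2 of the projection step.\<close>

lemma power2_norm_closest_point_diff_le:
  fixes S :: "'a::euclidean_space set"
  assumes "closed S" "convex S" "v \<in> S"
  shows "(norm (closest_point S x - v))\<^sup>2 \<le> (norm (x - v))\<^sup>2 - (norm (closest_point S x - x))\<^sup>2"
proof -
  define p where "p = closest_point S x"
  have obtuse: "inner (x - p) (v - p) \<le> 0"
    using closest_point_dot[OF assms(2,1,3)] by (simp add: p_def)
  have "(norm (x - v))\<^sup>2 = (norm (x - p))\<^sup>2 + (norm (p - v))\<^sup>2 - 2 * inner (x - p) (v - p)"
    unfolding power2_norm_eq_inner by (simp add: inner_diff inner_commute algebra_simps)
  with obtuse show ?thesis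
    by (simp add: p_def norm_minus_commute)
qed

lemma power2_norm_convex_comb_le:
  fixes y :: "'k \<Rightarrow> 'a::real_normed_vector"
  assumes "finite I" "\<And>j. j \<in> I \<Longrightarrow> 0 \<le> w j" "sum w I = 1"
  shows "(norm (\<Sum>j\<in>I. w j *\<^sub>R y j))\<^sup>2 \<le> (\<Sum>j\<in>I. w j * (norm (y j))\<^sup>2)"
proof -
  have "I \<noteq> {}"
    using assms(3) by auto
  have "norm (\<Sum>j\<in>I. w j *\<^sub>R y j) \<le> (\<Sum>j\<in>I. w j * norm (y j))"
    by (rule order_trans[OF norm_sum]) (simp add: assms(2))
  then have "(norm (\<Sum>j\<in>I. w j *\<^sub>R y j))\<^sup>2 \<le> (\<Sum>j\<in>I. w j * norm (y j))\<^sup>2"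
    by (simp add: power_mono)
  also have "\<dots> \<le> (\<Sum>j\<in>I. w j * (norm (y j))\<^sup>2)"
    using convex_on_sum[OF assms(1) \<open>I \<noteq> {}\<close> convex_power2, of w "\<lambda>j. norm (y j)"] assms
    by simp
  finally show ?thesis .
qed

lemma norm_sum_scaleR_le:
  fixes x :: "'k \<Rightarrow> 'a::real_normed_vector"
  assumes "\<And>k. k \<in> I \<Longrightarrow> \<bar>c k\<bar> \<le> M"
  shows "norm (\<Sum>k\<in>I. c k *\<^sub>R x k) \<le> M * (\<Sum>k\<in>I. norm (x k))"
proof -
  have "norm (\<Sum>k\<in>I. c k *\<^sub>R x k) \<le> (\<Sum>k\<in>I. \<bar>c k\<bar> * norm (x k))"
    by (rule order_trans[OF norm_sum]) simp
  also have "\<dots> \<le> (\<Sum>k\<in>I. M * norm (x k))"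
    by (rule sum_mono) (simp add: assms mult_right_mono)
  finally show ?thesis
    by (simp add: sum_distrib_left)
qed

lemma sum_scaleR_sum_swap:
  fixes x :: "'k \<Rightarrow> 'a::real_vector"
  shows "(\<Sum>j\<in>J. a j *\<^sub>R (\<Sum>k\<in>K. T j k *\<^sub>R x k)) = (\<Sum>k\<in>K. (\<Sum>j\<in>J. a j * T j k) *\<^sub>R x k)"
  by (simp add: scaleR_sum_right scaleR_sum_left sum.swap[of _ J])

lemma sum_id_mat_scaleR:
  fixes f :: "'i::finite \<Rightarrow> 'a::real_vector"
  shows "(\<Sum>k\<in>UNIV. id_mat i k *\<^sub>R f k) = f i"
proof -
  have "(\<Sum>k\<in>UNIV. id_mat i k *\<^sub>R f k) = (\<Sum>k\<in>UNIV. if i = k then f k else 0)"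
    by (rule sum.cong) (auto simp: id_mat_def)
  then show ?thesis
    by simp
qed

lemma trans_prod_same: "trans_prod A s s = id_mat"
  by (cases s) auto

lemma trans_prod_expansion:
  fixes A :: "nat \<Rightarrow> 'i::finite \<Rightarrow> 'i \<Rightarrow> real" and x u :: "nat \<Rightarrow> 'i \<Rightarrow> 'a::real_vector"
  assumes rec: "\<And>s i. x (Suc s) i = (\<Sum>j\<in>UNIV. A s i j *\<^sub>R x s j) + u s i"
  shows "x t i = (\<Sum>k\<in>UNIV. trans_prod A t 0 i k *\<^sub>R x 0 k)
           + (\<Sum>r<t. \<Sum>k\<in>UNIV. trans_prod A t (Suc r) i k *\<^sub>R u r k)"
proof (induction t arbitrary: i)
  case 0
  show ?case
    by (simp add: sum_id_mat_scaleR)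
next
  case (Suc t)
  have mix: "(\<Sum>j\<in>UNIV. A t i j *\<^sub>R (\<Sum>k\<in>UNIV. trans_prod A t r j k *\<^sub>R f k))
      = (\<Sum>k\<in>UNIV. trans_prod A (Suc t) r i k *\<^sub>R f k)" if "r \<le> t" for r and f :: "'i \<Rightarrow> 'a"
    using that by (simp add: sum_scaleR_sum_swap mat_prod_def)
  have swap: "(\<Sum>j\<in>UNIV. A t i j *\<^sub>R (\<Sum>r<t. g r j)) = (\<Sum>r<t. \<Sum>j\<in>UNIV. A t i j *\<^sub>R g r j)"
    for g :: "nat \<Rightarrow> 'i \<Rightarrow> 'a"
    unfolding scaleR_sum_right by (rule sum.swap)
  have "x (Suc t) i = (\<Sum>j\<in>UNIV. A t i j *\<^sub>R (\<Sum>k\<in>UNIV. trans_prod A t 0 j k *\<^sub>R x 0 k))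
      + (\<Sum>r<t. \<Sum>j\<in>UNIV. A t i j *\<^sub>R (\<Sum>k\<in>UNIV. trans_prod A t (Suc r) j k *\<^sub>R u r k)) + u t i"
    unfolding rec Suc.IH scaleR_add_right sum.distrib swap ..
  also have "\<dots> = (\<Sum>k\<in>UNIV. trans_prod A (Suc t) 0 i k *\<^sub>R x 0 k)
      + (\<Sum>r<t. \<Sum>k\<in>UNIV. trans_prod A (Suc t) (Suc r) i k *\<^sub>R u r k)
      + (\<Sum>k\<in>UNIV. trans_prod A (Suc t) (Suc t) i k *\<^sub>R u t k)"
    by (simp add: mix trans_prod_same sum_id_mat_scaleR)
  finally show ?case
    by simp
qed

lemma stationary_average_expansion:
  fixes A :: "nat \<Rightarrow> 'i::finite \<Rightarrow> 'i \<Rightarrow> real" and x u :: "nat \<Rightarrow> 'i \<Rightarrow> 'a::real_vector"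
  assumes p_stat: "\<And>s j. p s j = (\<Sum>i\<in>UNIV. p (Suc s) i * A s i j)"
    and rec: "\<And>s i. x (Suc s) i = (\<Sum>j\<in>UNIV. A s i j *\<^sub>R x s j) + u s i"
  shows "(\<Sum>j\<in>UNIV. p t j *\<^sub>R x t j)
       = (\<Sum>k\<in>UNIV. p 0 k *\<^sub>R x 0 k) + (\<Sum>r<t. \<Sum>k\<in>UNIV. p (Suc r) k *\<^sub>R u r k)"
proof (induction t)
  case 0
  show ?case
    by simp
next
  case (Suc t)
  have "(\<Sum>i\<in>UNIV. p (Suc t) i *\<^sub>R x (Suc t) i)
      = (\<Sum>j\<in>UNIV. p t j *\<^sub>R x t j) + (\<Sum>i\<in>UNIV. p (Suc t) i *\<^sub>R u t i)"
    by (simp add: rec scaleR_add_right sum.distrib sum_scaleR_sum_swap p_stat[symmetric])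
  with Suc.IH show ?case
    by simp
qed

lemma consensus_error_le:
  fixes A :: "nat \<Rightarrow> 'i::finite \<Rightarrow> 'i \<Rightarrow> real" and x u :: "nat \<Rightarrow> 'i \<Rightarrow> 'a::real_normed_vector"
  assumes p_stat: "\<And>s j. p s j = (\<Sum>i\<in>UNIV. p (Suc s) i * A s i j)"
    and rec: "\<And>s i. x (Suc s) i = (\<Sum>j\<in>UNIV. A s i j *\<^sub>R x s j) + u s i"
    and mixing: "\<And>s r i j. r \<le> s \<Longrightarrow> \<bar>trans_prod A s r i j - p r j\<bar> \<le> B * \<rho> ^ (s - r)"
  shows "norm (x t i - (\<Sum>j\<in>UNIV. p t j *\<^sub>R x t j))
     \<le> B * \<rho> ^ t * (\<Sum>k\<in>UNIV. norm (x 0 k))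
        + (\<Sum>r<t. B * \<rho> ^ (t - r - 1) * (\<Sum>k\<in>UNIV. norm (u r k)))"
proof -
  have split: "x t i - (\<Sum>j\<in>UNIV. p t j *\<^sub>R x t j)
      = (\<Sum>k\<in>UNIV. (trans_prod A t 0 i k - p 0 k) *\<^sub>R x 0 k)
        + (\<Sum>r<t. \<Sum>k\<in>UNIV. (trans_prod A t (Suc r) i k - p (Suc r) k) *\<^sub>R u r k)"
    by (subst trans_prod_expansion[of x A u, OF rec], subst stationary_average_expansion[of p A x u, OF p_stat rec])
      (simp add: scaleR_diff_left sum_subtractf)
  have "norm (x t i - (\<Sum>j\<in>UNIV. p t j *\<^sub>R x t j))
      \<le> norm (\<Sum>k\<in>UNIV. (trans_prod A t 0 i k - p 0 k) *\<^sub>R x 0 k)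
        + (\<Sum>r<t. norm (\<Sum>k\<in>UNIV. (trans_prod A t (Suc r) i k - p (Suc r) k) *\<^sub>R u r k))"
    unfolding split by (intro order_trans[OF norm_triangle_ineq] add_left_mono norm_sum)
  also have "\<dots> \<le> B * \<rho> ^ t * (\<Sum>k\<in>UNIV. norm (x 0 k))
      + (\<Sum>r<t. B * \<rho> ^ (t - r - 1) * (\<Sum>k\<in>UNIV. norm (u r k)))"
  proof (intro add_mono norm_sum_scaleR_le sum_mono)
    show "\<bar>trans_prod A t 0 i k - p 0 k\<bar> \<le> B * \<rho> ^ t" for k
      using mixing[of 0 t] by simp
    show "\<bar>trans_prod A t (Suc r) i k - p (Suc r) k\<bar> \<le> B * \<rho> ^ (t - r - 1)" if "r \<in> {..<t}" for r k
      using mixing[of "Suc r" t] that by simp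
  qed
  finally show ?thesis .
qed

lemma consensus_error_projected_le:
  fixes A :: "nat \<Rightarrow> 'i::finite \<Rightarrow> 'i \<Rightarrow> real" and x \<phi> :: "nat \<Rightarrow> 'i \<Rightarrow> 'a::real_normed_vector"
  assumes p_stat: "\<And>s j. p s j = (\<Sum>i\<in>UNIV. p (Suc s) i * A s i j)"
    and \<phi>_def: "\<And>s i. \<phi> s i = x (Suc s) i - ((\<Sum>j\<in>UNIV. A s i j *\<^sub>R x s j) - \<alpha> s *\<^sub>R c)"
    and mixing: "\<And>s r i j. r \<le> s \<Longrightarrow> \<bar>trans_prod A s r i j - p r j\<bar> \<le> B * \<rho> ^ (s - r)"
    and "0 \<le> B" "0 \<le> \<rho>" "\<And>s. 0 \<le> \<alpha> s"
  shows "norm (x t i - (\<Sum>j\<in>UNIV. p t j *\<^sub>R x t j))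
     \<le> B * (\<Sum>k\<in>UNIV. norm (x 0 k)) * \<rho> ^ t
        + B * (\<Sum>r<t. \<rho> ^ (t - r - 1) * (\<Sum>k\<in>UNIV. norm (\<phi> r k)))
        + real CARD('i) * B * norm c * (\<Sum>r<t. \<rho> ^ (t - r - 1) * \<alpha> r)"
proof -
  define u where "u s i = \<phi> s i - \<alpha> s *\<^sub>R c" for s i
  have rec: "x (Suc s) i = (\<Sum>j\<in>UNIV. A s i j *\<^sub>R x s j) + u s i" for s i
    by (simp add: u_def \<phi>_def)
  have u_le: "(\<Sum>k\<in>UNIV. norm (u r k)) \<le> (\<Sum>k\<in>UNIV. norm (\<phi> r k)) + real CARD('i) * (\<alpha> r * norm c)" for r
  proof -
    have "(\<Sum>k\<in>UNIV. norm (u r k)) \<le> (\<Sum>k\<in>UNIV. norm (\<phi> r k) + \<alpha> r * norm c)"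
      unfolding u_def using \<open>0 \<le> \<alpha> r\<close>
      by (intro sum_mono order_trans[OF norm_triangle_ineq4]) simp
    then show ?thesis
      by (simp add: sum.distrib)
  qed
  have "norm (x t i - (\<Sum>j\<in>UNIV. p t j *\<^sub>R x t j))
      \<le> B * \<rho> ^ t * (\<Sum>k\<in>UNIV. norm (x 0 k)) + (\<Sum>r<t. B * \<rho> ^ (t - r - 1) * (\<Sum>k\<in>UNIV. norm (u r k)))"
    by (rule consensus_error_le[OF p_stat rec mixing])
  also have "\<dots> \<le> B * \<rho> ^ t * (\<Sum>k\<in>UNIV. norm (x 0 k))
      + (\<Sum>r<t. B * \<rho> ^ (t - r - 1) * ((\<Sum>k\<in>UNIV. norm (\<phi> r k)) + real CARD('i) * (\<alpha> r * norm c)))"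
    using assms(4,5) by (intro add_left_mono sum_mono mult_left_mono u_le) auto
  also have "\<dots> = B * (\<Sum>k\<in>UNIV. norm (x 0 k)) * \<rho> ^ t
        + B * (\<Sum>r<t. \<rho> ^ (t - r - 1) * (\<Sum>k\<in>UNIV. norm (\<phi> r k)))
        + real CARD('i) * B * norm c * (\<Sum>r<t. \<rho> ^ (t - r - 1) * \<alpha> r)"
    by (simp add: ring_distribs sum.distrib sum_distrib_left mult_ac)
  finally show ?thesis .
qed

lemma projected_step_weighted_sq_dist_le:
  fixes A :: "'i::finite \<Rightarrow> 'i \<Rightarrow> real" and x x' :: "'i \<Rightarrow> 'a::euclidean_space"
  assumes A_nonneg: "\<And>i j. 0 \<le> A i j" and A_stoch: "\<And>i. (\<Sum>j\<in>UNIV. A i j) = 1"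
    and q_nonneg: "\<And>i. 0 \<le> q i" and q_sum: "(\<Sum>i\<in>UNIV. q i) = 1"
    and p_stat: "\<And>j. p j = (\<Sum>i\<in>UNIV. q i * A i j)"
    and K_closed: "\<And>i. closed (K i)" and K_convex: "\<And>i. convex (K i)" and v_in_K: "\<And>i. v \<in> K i"
    and x'_def: "\<And>i. x' i = closest_point (K i) ((\<Sum>j\<in>UNIV. A i j *\<^sub>R x j) - \<alpha> *\<^sub>R c)"
  shows "(\<Sum>i\<in>UNIV. q i * (norm (x' i - v))\<^sup>2)
     \<le> (\<Sum>i\<in>UNIV. p i * (norm (x i - v))\<^sup>2) - 2 * \<alpha> * (c \<bullet> ((\<Sum>j\<in>UNIV. p j *\<^sub>R x j) - v))
        + \<alpha>\<^sup>2 * (norm c)\<^sup>2 - (\<Sum>i\<in>UNIV. q i * (norm (x' i - ((\<Sum>j\<in>UNIV. A i j *\<^sub>R x j) - \<alpha> *\<^sub>R c)))\<^sup>2)"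
proof -
  define z where "z i = (\<Sum>j\<in>UNIV. A i j *\<^sub>R x j) - \<alpha> *\<^sub>R c" for i
  define y where "y i = (\<Sum>j\<in>UNIV. A i j *\<^sub>R (x j - v))" for i
  have agent: "(norm (x' i - v))\<^sup>2
      \<le> (\<Sum>j\<in>UNIV. A i j * (norm (x j - v))\<^sup>2) - 2 * \<alpha> * (c \<bullet> y i) + \<alpha>\<^sup>2 * (norm c)\<^sup>2
        - (norm (x' i - z i))\<^sup>2" for i
  proof -
    have z_v: "z i - v = y i - \<alpha> *\<^sub>R c"
      by (simp add: z_def y_def scaleR_diff_right sum_subtractf scaleR_sum_left[symmetric] A_stoch)
    have "(norm (z i - v))\<^sup>2 = (norm (y i))\<^sup>2 - 2 * \<alpha> * (c \<bullet> y i) + \<alpha>\<^sup>2 * (norm c)\<^sup>2"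
      unfolding z_v power2_norm_eq_inner by (simp add: inner_diff inner_commute algebra_simps power2_eq_square)
    moreover have "(norm (y i))\<^sup>2 \<le> (\<Sum>j\<in>UNIV. A i j * (norm (x j - v))\<^sup>2)"
      unfolding y_def by (rule power2_norm_convex_comb_le) (auto simp: A_nonneg A_stoch)
    ultimately show ?thesis
      using power2_norm_closest_point_diff_le[OF K_closed K_convex v_in_K, of i "z i"]
      by (simp add: x'_def z_def)
  qed
  have mix: "(\<Sum>i\<in>UNIV. q i * (\<Sum>j\<in>UNIV. A i j * n j)) = (\<Sum>j\<in>UNIV. p j * n j)" for n :: "'i \<Rightarrow> real"
    using sum_scaleR_sum_swap[of q A n UNIV UNIV] by (simp add: p_stat)
  have p_sum: "(\<Sum>j\<in>UNIV. p j) = 1"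
    using mix[of "\<lambda>_. 1"] by (simp add: A_stoch q_sum)
  have weighted_y: "(\<Sum>i\<in>UNIV. q i *\<^sub>R y i) = (\<Sum>j\<in>UNIV. p j *\<^sub>R x j) - v"
    unfolding y_def sum_scaleR_sum_swap
    by (simp add: p_stat[symmetric] scaleR_diff_right sum_subtractf scaleR_sum_left[symmetric] p_sum)
  have drift: "(\<Sum>i\<in>UNIV. q i * (c \<bullet> y i)) = c \<bullet> ((\<Sum>j\<in>UNIV. p j *\<^sub>R x j) - v)"
    unfolding weighted_y[symmetric] by (simp add: inner_sum_right)
  have "(\<Sum>i\<in>UNIV. q i * (norm (x' i - v))\<^sup>2)
      \<le> (\<Sum>i\<in>UNIV. q i * ((\<Sum>j\<in>UNIV. A i j * (norm (x j - v))\<^sup>2) - 2 * \<alpha> * (c \<bullet> y i)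
          + \<alpha>\<^sup>2 * (norm c)\<^sup>2 - (norm (x' i - z i))\<^sup>2))"
    by (intro sum_mono mult_left_mono agent q_nonneg)
  also have "\<dots> = (\<Sum>i\<in>UNIV. q i * (\<Sum>j\<in>UNIV. A i j * (norm (x j - v))\<^sup>2))
      - 2 * \<alpha> * (\<Sum>i\<in>UNIV. q i * (c \<bullet> y i)) + \<alpha>\<^sup>2 * (norm c)\<^sup>2 * (\<Sum>i\<in>UNIV. q i)
      - (\<Sum>i\<in>UNIV. q i * (norm (x' i - z i))\<^sup>2)"
    by (simp add: ring_distribs sum.distrib sum_subtractf sum_distrib_left sum_distrib_right mult_ac)
  finally show ?thesis
    by (simp add: mix drift q_sum z_def)
qed

lemma norm_average_diff_closest_point_Inter_le:
  fixes K :: "'i::finite \<Rightarrow> 'a::euclidean_space set" and x :: "'i \<Rightarrow> 'a"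
  assumes K_closed: "\<And>i. closed (K i)" and nonempty: "(\<Inter>i. K i) \<noteq> {}"
    and regular: "\<And>y. y \<in> convex hull (\<Union>i. K i) \<Longrightarrow>
                   infdist y (\<Inter>i. K i) \<le> R * Max (range (\<lambda>i. infdist y (K i)))"
    and "0 \<le> R" and x_in_K: "\<And>i. x i \<in> K i"
    and p_nonneg: "\<And>i. 0 \<le> p i" and p_sum: "(\<Sum>i\<in>UNIV. p i) = 1"
    and close: "\<And>i. norm (x i - (\<Sum>j\<in>UNIV. p j *\<^sub>R x j)) \<le> E"
  shows "norm ((\<Sum>j\<in>UNIV. p j *\<^sub>R x j) - closest_point (\<Inter>i. K i) (\<Sum>j\<in>UNIV. p j *\<^sub>R x j)) \<le> R * E"
proof -
  define y where "y = (\<Sum>j\<in>UNIV. p j *\<^sub>R x j)"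
  have "y \<in> convex hull (\<Union>i. K i)"
    unfolding y_def using x_in_K by (intro convex_sum) (auto simp: p_sum p_nonneg intro: hull_inc)
  then have "infdist y (\<Inter>i. K i) \<le> R * Max (range (\<lambda>i. infdist y (K i)))"
    by (rule regular)
  moreover have "infdist y (K i) \<le> E" for i
    using infdist_le[OF x_in_K[of i], of y] close[of i] by (simp add: y_def dist_norm norm_minus_commute)
  then have "Max (range (\<lambda>i. infdist y (K i))) \<le> E"
    by auto
  ultimately have "infdist y (\<Inter>i. K i) \<le> R * E"
    using \<open>0 \<le> R\<close> by (meson mult_left_mono order_trans)
  moreover have "closed (\<Inter>i. K i)"
    by (simp add: closed_INT K_closed)
  ultimately show ?thesis
    by (simp add: y_def infdist_eq_setdist setdist_closest_point[OF _ nonempty] dist_norm)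
qed

lemma projected_consensus_descent_le:
  fixes A :: "'i::finite \<Rightarrow> 'i \<Rightarrow> real" and K :: "'i \<Rightarrow> 'a::euclidean_space set"
    and x x' :: "'i \<Rightarrow> 'a"
  assumes A_nonneg: "\<And>i j. 0 \<le> A i j" and A_stoch: "\<And>i. (\<Sum>j\<in>UNIV. A i j) = 1"
    and q_nonneg: "\<And>i. 0 \<le> q i" and q_sum: "(\<Sum>i\<in>UNIV. q i) = 1" and q_lower: "\<And>i. \<eta> \<le> q i"
    and p_nonneg: "\<And>i. 0 \<le> p i" and p_sum: "(\<Sum>i\<in>UNIV. p i) = 1"
    and p_stat: "\<And>j. p j = (\<Sum>i\<in>UNIV. q i * A i j)"
    and K_closed: "\<And>i. closed (K i)" and K_convex: "\<And>i. convex (K i)"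
    and regular: "\<And>y. y \<in> convex hull (\<Union>i. K i) \<Longrightarrow>
                   infdist y (\<Inter>i. K i) \<le> R * Max (range (\<lambda>i. infdist y (K i)))"
    and "0 \<le> R" and v_in: "v \<in> (\<Inter>i. K i)" and x_in_K: "\<And>i. x i \<in> K i"
    and close: "\<And>i. norm (x i - (\<Sum>j\<in>UNIV. p j *\<^sub>R x j)) \<le> E"
    and "0 \<le> \<alpha>"
    and x'_def: "\<And>i. x' i = closest_point (K i) ((\<Sum>j\<in>UNIV. A i j *\<^sub>R x j) - \<alpha> *\<^sub>R c)"
  shows "(\<Sum>i\<in>UNIV. q i * (norm (x' i - v))\<^sup>2)
     \<le> (\<Sum>i\<in>UNIV. p i * (norm (x i - v))\<^sup>2)
        - 2 * \<alpha> * (c \<bullet> (closest_point (\<Inter>i. K i) (\<Sum>j\<in>UNIV. p j *\<^sub>R x j) - v))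
        + \<alpha>\<^sup>2 * (norm c)\<^sup>2 - \<eta> * (\<Sum>i\<in>UNIV. (norm (x' i - ((\<Sum>j\<in>UNIV. A i j *\<^sub>R x j) - \<alpha> *\<^sub>R c)))\<^sup>2)
        + 2 * \<alpha> * norm c * R * E"
proof -
  define y where "y = (\<Sum>j\<in>UNIV. p j *\<^sub>R x j)"
  define w where "w = closest_point (\<Inter>i. K i) y"
  define r where "r i = x' i - ((\<Sum>j\<in>UNIV. A i j *\<^sub>R x j) - \<alpha> *\<^sub>R c)" for i
  have "(\<Sum>i\<in>UNIV. q i * (norm (x' i - v))\<^sup>2)
      \<le> (\<Sum>i\<in>UNIV. p i * (norm (x i - v))\<^sup>2) - 2 * \<alpha> * (c \<bullet> (y - v))
        + \<alpha>\<^sup>2 * (norm c)\<^sup>2 - (\<Sum>i\<in>UNIV. q i * (norm (r i))\<^sup>2)"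
    unfolding y_def r_def using v_in
    by (intro projected_step_weighted_sq_dist_le[OF A_nonneg A_stoch q_nonneg q_sum p_stat
          K_closed K_convex _ x'_def]) auto
  moreover have "\<eta> * (\<Sum>i\<in>UNIV. (norm (r i))\<^sup>2) \<le> (\<Sum>i\<in>UNIV. q i * (norm (r i))\<^sup>2)"
    unfolding sum_distrib_left by (intro sum_mono mult_right_mono q_lower) simp
  moreover have "norm (y - w) \<le> R * E"
    unfolding y_def w_def using v_in
    by (intro norm_average_diff_closest_point_Inter_le[OF K_closed _ regular \<open>0 \<le> R\<close> x_in_K
          p_nonneg p_sum close]) auto
  then have "c \<bullet> (w - v) - c \<bullet> (y - v) \<le> norm c * (R * E)"
    using norm_cauchy_schwarz[of c "w - y"] mult_left_mono[of _ _ "norm c"]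
    by (force simp: inner_diff_right norm_minus_commute)
  then have "2 * \<alpha> * (c \<bullet> (w - v) - c \<bullet> (y - v)) \<le> 2 * \<alpha> * (norm c * (R * E))"
    using \<open>0 \<le> \<alpha>\<close> by (intro mult_left_mono) auto
  ultimately show ?thesis
    unfolding y_def[symmetric] w_def[symmetric] r_def[symmetric] by (simp add: algebra_simps)
qed

lemma discounted_sum_Suc_le:
  fixes \<alpha> \<beta> :: "nat \<Rightarrow> real"
  assumes "0 \<le> \<rho>" "\<alpha> (Suc t) \<le> \<alpha> t" "\<And>r. 0 \<le> \<beta> r"
  shows "\<alpha> (Suc t) * (\<Sum>r<Suc t. \<rho> ^ (Suc t - r - 1) * \<beta> r)
      \<le> \<rho> * (\<alpha> t * (\<Sum>r<t. \<rho> ^ (t - r - 1) * \<beta> r)) + \<alpha> t * \<beta> t"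
proof -
  have "(\<Sum>r<t. \<rho> ^ (Suc t - r - 1) * \<beta> r) = \<rho> * (\<Sum>r<t. \<rho> ^ (t - r - 1) * \<beta> r)"
    unfolding sum_distrib_left
    by (rule sum.cong) (auto simp: Suc_diff_Suc simp flip: power_Suc)
  then have unroll: "(\<Sum>r<Suc t. \<rho> ^ (Suc t - r - 1) * \<beta> r) = \<rho> * (\<Sum>r<t. \<rho> ^ (t - r - 1) * \<beta> r) + \<beta> t"
    by simp
  have "0 \<le> (\<Sum>r<Suc t. \<rho> ^ (Suc t - r - 1) * \<beta> r)"
    using assms by (intro sum_nonneg mult_nonneg_nonneg) auto
  then have "\<alpha> (Suc t) * (\<Sum>r<Suc t. \<rho> ^ (Suc t - r - 1) * \<beta> r)
      \<le> \<alpha> t * (\<Sum>r<Suc t. \<rho> ^ (Suc t - r - 1) * \<beta> r)"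
    using assms(2) by (rule mult_right_mono[rotated])
  then show ?thesis
    unfolding unroll by (simp add: algebra_simps)
qed

lemma discounted_residual_sum_step_le:
  fixes \<alpha> :: "nat \<Rightarrow> real" and \<phi> :: "nat \<Rightarrow> 'i::finite \<Rightarrow> 'a::real_normed_vector"
  assumes "0 \<le> \<rho>" "\<alpha> (Suc t) \<le> \<alpha> t" "0 \<le> a" "0 \<le> b"
  defines "\<beta> \<equiv> \<lambda>r. \<Sum>i\<in>UNIV. norm (\<phi> r i)"
  shows "a * b * (\<alpha> (Suc t) * (\<Sum>r<Suc t. \<rho> ^ (Suc t - r - 1) * \<beta> r))
      \<le> \<rho> * (a * b * (\<alpha> t * (\<Sum>r<t. \<rho> ^ (t - r - 1) * \<beta> r)))
        + a\<^sup>2 / 2 * (\<alpha> t)\<^sup>2 + b\<^sup>2 * real CARD('i) / 2 * (\<Sum>i\<in>UNIV. (norm (\<phi> t i))\<^sup>2)"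
proof -
  have "a * b * (\<alpha> (Suc t) * (\<Sum>r<Suc t. \<rho> ^ (Suc t - r - 1) * \<beta> r))
      \<le> a * b * (\<rho> * (\<alpha> t * (\<Sum>r<t. \<rho> ^ (t - r - 1) * \<beta> r)) + \<alpha> t * \<beta> t)"
    using assms by (intro mult_left_mono discounted_sum_Suc_le) (auto simp: \<beta>_def sum_nonneg)
  moreover have "a * b * (\<alpha> t * \<beta> t) \<le> a\<^sup>2 / 2 * (\<alpha> t)\<^sup>2 + b\<^sup>2 / 2 * (\<beta> t)\<^sup>2"
    using sum_squares_bound[of "a * \<alpha> t" "b * \<beta> t"] by (simp add: power_mult_distrib mult_ac)
  moreover have "(\<beta> t)\<^sup>2 \<le> real CARD('i) * (\<Sum>i\<in>UNIV. (norm (\<phi> t i))\<^sup>2)"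
    using sum_squared_le_sum_of_squares[of "\<lambda>i. norm (\<phi> t i)" UNIV] by (simp add: \<beta>_def mult_ac)
  then have "b\<^sup>2 / 2 * (\<beta> t)\<^sup>2 \<le> b\<^sup>2 / 2 * (real CARD('i) * (\<Sum>i\<in>UNIV. (norm (\<phi> t i))\<^sup>2))"
    by (rule mult_left_mono) simp
  ultimately show ?thesis
    by (simp add: algebra_simps)
qed

theorem proposition8:
  fixes A :: "nat \<Rightarrow> 'i::finite \<Rightarrow> 'i \<Rightarrow> real"
    and Om :: "'i \<Rightarrow> 'a::euclidean_space set"
    and c :: 'a
    and alpha :: "nat \<Rightarrow> real"
    and theta :: "nat \<Rightarrow> 'i \<Rightarrow> 'a"
    and pi :: "nat \<Rightarrow> 'i \<Rightarrow> real"
    and B lambda eta R :: real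
    and v :: 'a and t :: nat
  defines "Omega \<equiv> (\<Inter>i. Om i)"
    and "phi \<equiv> (\<lambda>s i. theta (Suc s) i - ((\<Sum>j\<in>UNIV. A s i j *\<^sub>R theta s j) - alpha s *\<^sub>R c))"
    and "w \<equiv> (\<lambda>s. closest_point (\<Inter>i. Om i) (\<Sum>j\<in>UNIV. pi s j *\<^sub>R theta s j))"
    and "psi \<equiv> (\<lambda>s. alpha s * (\<Sum>r<s. lambda ^ (s - r - 1) *
                 (\<Sum>i\<in>UNIV. norm (theta (Suc r) i - ((\<Sum>j\<in>UNIV. A r i j *\<^sub>R theta r j) - alpha r *\<^sub>R c)))))"
    and "D1 \<equiv> B * (\<Sum>j\<in>UNIV. norm (theta 0 j))"
    and "D2 \<equiv> real CARD('i) * B * norm c"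
    and "D3 \<equiv> 2 * norm c * (1 + R / eta)"
    and "D4 \<equiv> eta / 2"
    and "b \<equiv> sqrt (eta / real CARD('i))"
    and "a \<equiv> (2 * norm c * (1 + R / eta)) * B / ((1 - lambda) * sqrt (eta / real CARD('i)))"
    and "D5 \<equiv> (norm c)\<^sup>2 + ((2 * norm c * (1 + R / eta)) * B / ((1 - lambda) * sqrt (eta / real CARD('i))))\<^sup>2 / 2"
    and "D13 \<equiv> (B * (\<Sum>j\<in>UNIV. norm (theta 0 j))) * (2 * norm c * (1 + R / eta))"
    and "D23 \<equiv> (real CARD('i) * B * norm c) * (2 * norm c * (1 + R / eta))"
  assumes A_nonneg: "\<And>s i j. 0 \<le> A s i j"
    and A_stoch: "\<And>s i. (\<Sum>j\<in>UNIV. A s i j) = 1"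
    and Om_closed: "\<And>i. closed (Om i)"
    and Om_convex: "\<And>i. convex (Om i)"
    and Om_ne: "\<And>i. Om i \<noteq> {}"
    and Omega_ne: "Omega \<noteq> {}"
    and alpha_pos: "\<And>s. alpha s > 0"
    and alpha_noninc: "\<And>s. alpha (Suc s) \<le> alpha s"
    and theta0: "\<And>i. theta 0 i \<in> Om i"
    and DPG: "\<And>s i. theta (Suc s) i =
                 closest_point (Om i) ((\<Sum>j\<in>UNIV. A s i j *\<^sub>R theta s j) - alpha s *\<^sub>R c)"
    and pi_nonneg: "\<And>s i. 0 \<le> pi s i"
    and pi_sum: "\<And>s. (\<Sum>i\<in>UNIV. pi s i) = 1"
    and pi_stat: "\<And>s j. pi s j = (\<Sum>i\<in>UNIV. pi (Suc s) i * A s i j)"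
    and B_pos: "B > 0"
    and lambda_pos: "0 < lambda" and lambda_lt1: "lambda < 1"
    and mixing: "\<And>s r i j. r \<le> s \<Longrightarrow> \<bar>trans_prod A s r i j - pi r j\<bar> \<le> B * lambda ^ (s - r)"
    and eta_pos: "eta > 0"
    and pi_lower: "\<And>s i. pi s i \<ge> eta"
    and R_ge1: "R \<ge> 1"
    and regular: "\<And>x. x \<in> convex hull (\<Union>i. Om i) \<Longrightarrow>
                   infdist x Omega \<le> R * Max (range (\<lambda>i. infdist x (Om i)))"
    and v_in: "v \<in> Omega"
  shows "(\<Sum>i\<in>UNIV. pi (Suc t) i * (norm (theta (Suc t) i - v))\<^sup>2) + a * b * psi (Suc t)
         \<le> (\<Sum>i\<in>UNIV. pi t i * (norm (theta t i - v))\<^sup>2) + a * b * psi t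
            - 2 * alpha t * (c \<bullet> (w t - v)) + D5 * (alpha t)\<^sup>2
            - D4 * (\<Sum>i\<in>UNIV. (norm (phi t i))\<^sup>2)
            + D13 * alpha t * lambda ^ t
            + D23 * alpha t * (\<Sum>r<t. lambda ^ (t - r - 1) * alpha r)"
proof -
  define avg where "avg = (\<Sum>j\<in>UNIV. pi t j *\<^sub>R theta t j)"
  define beta where "beta r = (\<Sum>i\<in>UNIV. norm (phi r i))" for r
  define E where "E = D1 * lambda ^ t + B * (\<Sum>r<t. lambda ^ (t - r - 1) * beta r)
                      + D2 * (\<Sum>r<t. lambda ^ (t - r - 1) * alpha r)"
  have psi_eq: "psi s = alpha s * (\<Sum>r<s. lambda ^ (s - r - 1) * beta r)" for s
    by (simp add: psi_def phi_def beta_def)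
  have theta_in: "theta s i \<in> Om i" for s i
    using theta0 DPG closest_point_in_set[OF Om_closed Om_ne] by (cases s) auto
  have consensus: "norm (theta t i - avg) \<le> E" for i
    unfolding avg_def E_def D1_def D2_def beta_def
    by (rule consensus_error_projected_le[OF pi_stat _ mixing])
      (use B_pos lambda_pos alpha_pos in \<open>auto simp: phi_def less_imp_le\<close>)
  have descent: "(\<Sum>i\<in>UNIV. pi (Suc t) i * (norm (theta (Suc t) i - v))\<^sup>2)
      \<le> (\<Sum>i\<in>UNIV. pi t i * (norm (theta t i - v))\<^sup>2) - 2 * alpha t * (c \<bullet> (w t - v))
        + (alpha t)\<^sup>2 * (norm c)\<^sup>2 - eta * (\<Sum>i\<in>UNIV. (norm (phi t i))\<^sup>2)
        + alpha t * (2 * norm c * R) * E"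
    unfolding phi_def w_def
    using projected_consensus_descent_le[OF A_nonneg A_stoch pi_nonneg pi_sum pi_lower pi_nonneg pi_sum
        pi_stat Om_closed Om_convex regular[unfolded Omega_def] _ v_in[unfolded Omega_def] theta_in
        consensus[unfolded avg_def] less_imp_le[OF alpha_pos] DPG] R_ge1
    by (simp add: mult_ac)
  have price: "alpha t * (2 * norm c * R) * E \<le> alpha t * D3 * E"
  proof -
    have "eta \<le> 1"
      using order_trans[OF pi_lower member_le_sum[of _ UNIV "pi 0"]] pi_nonneg pi_sum by simp
    then have "R * eta \<le> R * 1"
      using R_ge1 by (intro mult_left_mono) auto
    then have "R \<le> 1 + R / eta"
      using eta_pos by (simp add: field_simps)
    then show ?thesis
      unfolding D3_def using alpha_pos[of t] order_trans[OF norm_ge_zero consensus]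
      by (intro mult_right_mono mult_left_mono) auto
  qed
  have potential: "a * b * psi (Suc t) \<le> a * b * psi t - D3 * B * psi t + a\<^sup>2 / 2 * (alpha t)\<^sup>2
      + eta / 2 * (\<Sum>i\<in>UNIV. (norm (phi t i))\<^sup>2)"
  proof -
    have "0 < b"
      unfolding b_def using eta_pos by simp
    then have ab: "a * b * (1 - lambda) = D3 * B" and "0 \<le> a"
      unfolding a_def D3_def using B_pos lambda_lt1 eta_pos R_ge1
      by (simp_all add: b_def[symmetric] field_simps)
    moreover have "b\<^sup>2 = eta / real CARD('i)"
      unfolding b_def using eta_pos by simp
    ultimately have "a * b * psi (Suc t) \<le> lambda * (a * b * psi t) + a\<^sup>2 / 2 * (alpha t)\<^sup>2
      + eta / 2 * (\<Sum>i\<in>UNIV. (norm (phi t i))\<^sup>2)"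
      using discounted_residual_sum_step_le[of lambda alpha t a b phi] lambda_pos alpha_noninc \<open>0 < b\<close>
      unfolding psi_eq beta_def by simp
    moreover have "lambda * (a * b * psi t) = a * b * psi t - D3 * B * psi t"
      unfolding ab[symmetric] by (simp add: algebra_simps)
    ultimately show ?thesis
      by linarith
  qed
  have "alpha t * D3 * E = D13 * alpha t * lambda ^ t + D3 * B * psi t
      + D23 * alpha t * (\<Sum>r<t. lambda ^ (t - r - 1) * alpha r)"
    by (simp add: E_def psi_eq D13_def D23_def D1_def D2_def D3_def algebra_simps)
  moreover have "D5 * (alpha t)\<^sup>2 = (alpha t)\<^sup>2 * (norm c)\<^sup>2 + a\<^sup>2 / 2 * (alpha t)\<^sup>2"
    by (simp add: D5_def a_def algebra_simps)
  ultimately show ?thesis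
    using descent price potential unfolding D4_def by linarith
qed

end
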